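(* For all $d,K\in\mathbb{Z}_{++}$, if $(X_t)_{t\ge0}$ is generated by the binary AR(K) process, then for all $T\in\mathbb{Z}_{++}$, $$\mathcal{L}_T\le\frac{dK}{2T}\Big(1+\ln\Big(1+\frac{T}{4dK}\Big)\Big).$$
   Context: Binary AR(K) process: $\Phi_0,\Phi_1\in\mathbb{R}^d$ are known vectors with $\|\Phi_0\|_2=\|\Phi_1\|_2=1$, and $\phi_t:=\Phi_{X_t}$. The parameters $\theta_1,\ldots,\theta_K$ are i.i.d. $\mathcal{N}(0,I_d/K)$. $(X_0,\ldots,X_{K-1})$ is uniform on $\{0,1\}^K$ and independent of $\theta_{1:K}$. For $t\ge K-1$, conditionally on $(\theta_{1:K},X_{0:t})$, $X_{t+1}=1$ with probability $\sigma\big(\sum_{k=1}^K\theta_k^\top\phi_{t-k+1}\big)$ and $X_{t+1}=0$ otherwise, where $\sigma(z)=1/(1+e^{-z})$. With $H_t=(X_0,\ldots,X_t)$, the estimation error is $$\mathcal{L}_T=\frac1T\sum_{t=0}^{T-1}\mathbb{E}\big[\mathrm{d}_{\mathrm{KL}}(\mathbb{P}(X_{t+1}\in\cdot\mid\theta_{1:K},H_t)\,\|\,\mathbb{P}(X_{t+1}\in\cdot\mid H_t))\big].$$ *)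

theory Defs
  imports "HOL-Probability.Probability"
begin

text \<open>Binary AR(K) process. Histories are bool lists h = [X_0, ..., X_t];
  True encodes the symbol 1, False the symbol 0.\<close>

definition sigmoid :: "real \<Rightarrow> real" where
  "sigmoid z = 1 / (1 + exp (- z))"

definition feat :: "real^'d \<Rightarrow> real^'d \<Rightarrow> bool \<Rightarrow> real^'d" where
  "feat \<Phi>0 \<Phi>1 b = (if b then \<Phi>1 else \<Phi>0)"

definition gauss_prior :: "nat \<Rightarrow> (real^'d) measure" where
  "gauss_prior K = density lborel
     (\<lambda>x. ennreal (\<Prod>i\<in>UNIV. normal_density 0 (1 / sqrt (real K)) (x $ i)))"

definition theta_prior :: "nat \<Rightarrow> (nat \<Rightarrow> real^'d) measure" where
  "theta_prior K = PiM {1..K} (\<lambda>_. gauss_prior K)"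

text \<open>For t >= K-1: P(X_{t+1} = 1 | theta, H_t = h) with h of length t+1.\<close>
definition ar_prob :: "real^'d \<Rightarrow> real^'d \<Rightarrow> nat \<Rightarrow> (nat \<Rightarrow> real^'d) \<Rightarrow> bool list \<Rightarrow> nat \<Rightarrow> real" where
  "ar_prob \<Phi>0 \<Phi>1 K \<theta> h t =
     sigmoid (\<Sum>k=1..K. \<theta> k \<bullet> feat \<Phi>0 \<Phi>1 (h ! (t + 1 - k)))"

text \<open>P(X_{t+1} = 1 | theta, H_t = h) for all t, where t + 1 = length h
  (for t < K-1 the next symbol is part of the uniform initial block).\<close>
definition next_prob :: "real^'d \<Rightarrow> real^'d \<Rightarrow> nat \<Rightarrow> (nat \<Rightarrow> real^'d) \<Rightarrow> bool list \<Rightarrow> real" where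
  "next_prob \<Phi>0 \<Phi>1 K \<theta> h =
     (let t = length h - 1 in if K - 1 \<le> t then ar_prob \<Phi>0 \<Phi>1 K \<theta> h t else 1 / 2)"

text \<open>P(H_t = h | theta), h of length t+1 >= 1.\<close>
definition hist_lik :: "real^'d \<Rightarrow> real^'d \<Rightarrow> nat \<Rightarrow> (nat \<Rightarrow> real^'d) \<Rightarrow> bool list \<Rightarrow> real" where
  "hist_lik \<Phi>0 \<Phi>1 K \<theta> h =
     (1 / 2) ^ (min K (length h)) *
     (\<Prod>s\<in>{K - 1..<length h - 1}.
        (if h ! (s + 1) then ar_prob \<Phi>0 \<Phi>1 K \<theta> (take (s + 1) h) s
         else 1 - ar_prob \<Phi>0 \<Phi>1 K \<theta> (take (s + 1) h) s))"

definition pred_prob :: "real^'d \<Rightarrow> real^'d \<Rightarrow> nat \<Rightarrow> bool list \<Rightarrow> real" where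
  "pred_prob \<Phi>0 \<Phi>1 K h =
     (\<integral>\<theta>. hist_lik \<Phi>0 \<Phi>1 K \<theta> h * next_prob \<Phi>0 \<Phi>1 K \<theta> h \<partial>theta_prior K) /
     (\<integral>\<theta>. hist_lik \<Phi>0 \<Phi>1 K \<theta> h \<partial>theta_prior K)"

definition kl_bern :: "real \<Rightarrow> real \<Rightarrow> real" where
  "kl_bern a b = a * ln (a / b) + (1 - a) * ln ((1 - a) / (1 - b))"

text \<open>Estimation error L_T: the expectation over (theta, H_t) written out as
  sum over histories and integral over the prior.\<close>
definition est_error :: "real^'d \<Rightarrow> real^'d \<Rightarrow> nat \<Rightarrow> nat \<Rightarrow> real" where
  "est_error \<Phi>0 \<Phi>1 K T =
     (1 / real T) * (\<Sum>t<T. \<Sum>h\<in>{h :: bool list. length h = t + 1}.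
        \<integral>\<theta>. hist_lik \<Phi>0 \<Phi>1 K \<theta> h *
             kl_bern (next_prob \<Phi>0 \<Phi>1 K \<theta> h) (pred_prob \<Phi>0 \<Phi>1 K h) \<partial>theta_prior K)"

end

theory Submission
  imports Defs
begin

text \<open>By the chain rule for relative entropy the estimation error is \<open>I(\<theta>; H\<^sub>T) / T\<close>, the
  expectation over \<open>\<theta>\<close> of the divergence of \<open>P(H\<^sub>T | \<theta>)\<close> from the marginal law
  \<open>P(H\<^sub>T) = \<integral> P(H\<^sub>T | \<theta>') d\<theta>'\<close>. By the Gibbs variational inequality this divergence is at most
  the average, over \<open>\<theta>' \<sim> N(\<theta>, s\<^sup>2 I)\<close>, of the divergence of \<open>P(H\<^sub>T | \<theta>)\<close> from
  \<open>P(H\<^sub>T | \<theta>')\<close>, plus the relative entropy of \<open>N(\<theta>, s\<^sup>2 I)\<close> from the prior. The former splits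
  into per-step Bernoulli divergences between two sigmoids, each bounded by a squared difference
  of logits over \<open>8\<close>; with unit feature vectors this averages to \<open>K s\<^sup>2 / 8\<close> per step. The
  latter is an explicit Gaussian computation, and optimising \<open>s\<close> gives the bound.\<close>

section \<open>The Gaussian prior as a product of one-dimensional Gaussians\<close>

lemma vec_nth_sum_Basis:
  fixes f :: "real^'d \<Rightarrow> real"
  shows "(\<Sum>b\<in>Basis. f b *\<^sub>R b) $ i = f (axis i 1)"
proof -
  have "(\<Sum>b\<in>Basis. f b *\<^sub>R b) $ i = (\<Sum>b\<in>Basis. f b * (b $ i))"
    by (simp add: sum_component)
  also have "\<dots> = (\<Sum>b\<in>(\<lambda>j. axis j 1) ` UNIV. f b * (b $ i))"
    by (rule sum.cong) (auto simp: Basis_vec_def)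
  also have "\<dots> = (\<Sum>j\<in>UNIV. f (axis j 1) * (axis j (1::real) $ i))"
    by (subst sum.reindex) (auto simp: inj_on_def axis_eq_axis)
  also have "\<dots> = f (axis i 1)"
    by (simp add: axis_def if_distrib cong: if_cong)
  finally show ?thesis .
qed

lemma prod_Basis_vec:
  fixes H :: "real^'d \<Rightarrow> 'a::comm_monoid_mult"
  shows "(\<Prod>b\<in>Basis. H b) = (\<Prod>i\<in>UNIV. H (axis i 1))"
proof -
  have "(\<Prod>b\<in>Basis. H b) = (\<Prod>b\<in>(\<lambda>j. axis j 1) ` UNIV. H b)"
    by (rule prod.cong) (auto simp: Basis_vec_def)
  also have "\<dots> = (\<Prod>j\<in>UNIV. H (axis j 1))"
    by (subst prod.reindex) (auto simp: inj_on_def axis_eq_axis)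
  finally show ?thesis .
qed

lemma has_bochner_integral_lborel_vec_prod:
  fixes h :: "'d::finite \<Rightarrow> real \<Rightarrow> real"
  assumes h: "\<And>i. integrable lborel (h i)"
  shows "has_bochner_integral (lborel :: (real^'d) measure)
           (\<lambda>x. \<Prod>i\<in>UNIV. h i (x $ i)) (\<Prod>i\<in>UNIV. \<integral>x. h i x \<partial>lborel)"
proof -
  define ix :: "real^'d \<Rightarrow> 'd" where "ix = inv (\<lambda>j. axis j 1)"
  have ix: "ix (axis i 1) = i" for i
    unfolding ix_def by (rule inv_f_f) (auto simp: inj_on_def axis_eq_axis)
  define H where "H b = h (ix b)" for b
  interpret P: product_sigma_finite "\<lambda>_::real^'d. lborel :: real measure" by standard
  have coords: "(\<Prod>i\<in>UNIV. h i ((\<Sum>b\<in>Basis. f b *\<^sub>R b) $ i)) = (\<Prod>b\<in>Basis. H b (f b))"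
    for f :: "real^'d \<Rightarrow> real"
    by (simp only: vec_nth_sum_Basis prod_Basis_vec H_def ix)
  have "has_bochner_integral (\<Pi>\<^sub>M b\<in>Basis. lborel) (\<lambda>f. \<Prod>b\<in>Basis. H b (f b))
          (\<Prod>b\<in>Basis. \<integral>x. H b x \<partial>lborel)"
    unfolding has_bochner_integral_iff
    using P.product_integrable_prod[of Basis H] P.product_integral_prod[of Basis H] h
    by (auto simp: H_def)
  then have "has_bochner_integral (\<Pi>\<^sub>M b\<in>Basis. lborel)
      (\<lambda>f. \<Prod>i\<in>UNIV. h i ((\<Sum>b\<in>Basis. f b *\<^sub>R b) $ i)) (\<Prod>i\<in>UNIV. \<integral>x. h i x \<partial>lborel)"
    by (simp only: coords) (simp add: prod_Basis_vec H_def ix)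
  moreover have "(\<lambda>f. \<Sum>b\<in>Basis. f b *\<^sub>R b) \<in> measurable (\<Pi>\<^sub>M b\<in>Basis. lborel) (borel :: (real^'d) measure)"
    by measurable
  moreover have "(\<lambda>x::real^'d. \<Prod>i\<in>UNIV. h i (x $ i)) \<in> borel_measurable borel"
    using h by measurable
  ultimately show ?thesis
    by (subst lborel_eq) (rule has_bochner_integral_distr)
qed

definition prior_sd :: "nat \<Rightarrow> real" where
  "prior_sd K = 1 / sqrt (real K)"

definition prior_coord :: "nat \<Rightarrow> real measure" where
  "prior_coord K = density lborel (normal_density 0 (prior_sd K))"

lemma prior_sd_pos: "K > 0 \<Longrightarrow> prior_sd K > 0"
  by (simp add: prior_sd_def)

lemma prior_sd_square: "(prior_sd K)^2 = 1 / real K"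
  by (simp add: prior_sd_def power_divide)

lemma prob_space_prior_coord: "K > 0 \<Longrightarrow> prob_space (prior_coord K)"
  unfolding prior_coord_def by (intro prob_space_normal_density prior_sd_pos)

lemma has_bochner_integral_gauss_prior_prod:
  fixes g :: "'d::finite \<Rightarrow> real \<Rightarrow> real"
  assumes g: "\<And>i. integrable (prior_coord K) (g i)"
  shows "has_bochner_integral (gauss_prior K :: (real^'d) measure)
           (\<lambda>x. \<Prod>i\<in>UNIV. g i (x $ i)) (\<Prod>i\<in>UNIV. \<integral>x. g i x \<partial>prior_coord K)"
proof -
  let ?\<phi> = "normal_density 0 (prior_sd K)"
  have [measurable]: "g i \<in> borel_measurable borel" for i
    using borel_measurable_integrable[OF g[of i]] by (simp add: prior_coord_def)
  have "integrable lborel (\<lambda>x. ?\<phi> x * g i x)" for i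
    using g[of i] unfolding prior_coord_def by (subst (asm) integrable_density) auto
  moreover have "(\<integral>x. g i x \<partial>prior_coord K) = (\<integral>x. ?\<phi> x * g i x \<partial>lborel)" for i
    unfolding prior_coord_def by (subst integral_density) auto
  ultimately have "has_bochner_integral (lborel :: (real^'d) measure)
      (\<lambda>x. \<Prod>i\<in>UNIV. ?\<phi> (x $ i) * g i (x $ i)) (\<Prod>i\<in>UNIV. \<integral>x. g i x \<partial>prior_coord K)"
    using has_bochner_integral_lborel_vec_prod[of "\<lambda>i x. ?\<phi> x * g i x"] by simp
  then show ?thesis
    unfolding gauss_prior_def prior_sd_def[symmetric]
    by (intro has_bochner_integral_density) (auto simp: prod_nonneg prod.distrib)
qed

lemma prob_space_gauss_prior:
  assumes K: "K > 0"
  shows "prob_space (gauss_prior K :: (real^'d::finite) measure)"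
proof
  interpret N: prob_space "prior_coord K" by (rule prob_space_prior_coord[OF K])
  have "has_bochner_integral (gauss_prior K :: (real^'d) measure) (\<lambda>_. 1) (1::real)"
    using has_bochner_integral_gauss_prior_prod[of K "\<lambda>(_::'d) _. 1"] by (simp add: N.prob_space)
  then have "(\<integral>\<^sup>+x. ennreal 1 \<partial>(gauss_prior K :: (real^'d) measure)) = ennreal 1"
    by (subst nn_integral_eq_integral) (auto simp: has_bochner_integral_iff)
  then show "emeasure (gauss_prior K :: (real^'d) measure) (space (gauss_prior K)) = 1"
    by simp
qed

lemma prob_space_theta_prior:
  "K > 0 \<Longrightarrow> prob_space (theta_prior K :: (nat \<Rightarrow> real^'d::finite) measure)"
  unfolding theta_prior_def by (intro prob_space_PiM prob_space_gauss_prior)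

definition coord_prod :: "nat \<Rightarrow> (nat \<Rightarrow> 'd \<Rightarrow> real \<Rightarrow> real) \<Rightarrow> (nat \<Rightarrow> real^'d) \<Rightarrow> real" where
  "coord_prod K f \<theta> = (\<Prod>k\<in>{1..K}. \<Prod>i\<in>UNIV. f k i (\<theta> k $ i))"

lemma has_bochner_integral_theta_prior_coord_prod:
  fixes f :: "nat \<Rightarrow> 'd::finite \<Rightarrow> real \<Rightarrow> real"
  assumes K: "K > 0" and f: "\<And>k i. integrable (prior_coord K) (f k i)"
  shows "has_bochner_integral (theta_prior K :: (nat \<Rightarrow> real^'d) measure)
           (coord_prod K f) (\<Prod>k\<in>{1..K}. \<Prod>i\<in>UNIV. \<integral>x. f k i x \<partial>prior_coord K)"
proof -
  interpret G: prob_space "gauss_prior K :: (real^'d) measure" by (rule prob_space_gauss_prior[OF K])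
  interpret P: product_sigma_finite "\<lambda>_::nat. gauss_prior K :: (real^'d) measure" by standard
  have vec: "has_bochner_integral (gauss_prior K :: (real^'d) measure)
      (\<lambda>x. \<Prod>i\<in>UNIV. f k i (x $ i)) (\<Prod>i\<in>UNIV. \<integral>x. f k i x \<partial>prior_coord K)" for k
    by (rule has_bochner_integral_gauss_prior_prod) (rule f)
  show ?thesis
    unfolding has_bochner_integral_iff theta_prior_def coord_prod_def
    using P.product_integrable_prod[of "{1..K}" "\<lambda>k x. \<Prod>i\<in>UNIV. f k i (x $ i)"]
      P.product_integral_prod[of "{1..K}" "\<lambda>k x. \<Prod>i\<in>UNIV. f k i (x $ i)"] vec
    by (simp add: has_bochner_integral_iff)
qed

lemma prod_prod_delta:
  fixes c :: "'a::comm_monoid_mult"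
  assumes "finite A" and "k0 \<in> A"
  shows "(\<Prod>k\<in>A. \<Prod>i\<in>(UNIV::'d::finite set). if k = k0 \<and> i = i0 then c else 1) = c"
proof -
  have "(\<Prod>k\<in>A. \<Prod>i\<in>(UNIV::'d set). if k = k0 \<and> i = i0 then c else 1) = (\<Prod>k\<in>A. if k = k0 then c else 1)"
    by (intro prod.cong) (auto simp: prod.delta)
  also have "\<dots> = c"
    using assms by (simp add: prod.delta)
  finally show ?thesis .
qed

lemma coord_prod_mult_coord:
  assumes "k0 \<in> {1..K}"
  shows "coord_prod K (\<lambda>k i. if k = k0 \<and> i = i0 then (\<lambda>x. f k i x * h x) else f k i) \<theta>
           = coord_prod K f \<theta> * h (\<theta> k0 $ i0)"
proof -
  have "coord_prod K (\<lambda>k i. if k = k0 \<and> i = i0 then (\<lambda>x. f k i x * h x) else f k i) \<theta>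
     = (\<Prod>k\<in>{1..K}. \<Prod>i\<in>UNIV. f k i (\<theta> k $ i) * (if k = k0 \<and> i = i0 then h (\<theta> k0 $ i0) else 1))"
    unfolding coord_prod_def by (intro prod.cong refl) auto
  also have "\<dots> = coord_prod K f \<theta> * h (\<theta> k0 $ i0)"
    unfolding coord_prod_def prod.distrib prod_prod_delta[OF finite_atLeastAtMost assms] ..
  finally show ?thesis .
qed

lemma theta_prior_coord_square:
  assumes K: "K > 0" and k0: "k0 \<in> {1..K}"
  shows "has_bochner_integral (theta_prior K :: (nat \<Rightarrow> real^'d::finite) measure)
           (\<lambda>t. (t k0 $ i0)^2) (1 / real K)"
proof -
  interpret N: prob_space "prior_coord K" by (rule prob_space_prior_coord[OF K])
  define F where "F = (\<lambda>k i. if k = k0 \<and> i = i0 then (\<lambda>x. 1 * x^2) else (\<lambda>_. 1::real))"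
  have eq: "(\<lambda>t::nat \<Rightarrow> real^'d. (t k0 $ i0)^2) = coord_prod K F"
    unfolding F_def by (rule ext) (subst coord_prod_mult_coord[OF k0], simp add: coord_prod_def)
  have "has_bochner_integral (prior_coord K) (\<lambda>x. x^2) (1 / real K)"
    using normal_moment_even[OF prior_sd_pos[OF K], of 0 1] unfolding prior_coord_def
    by (intro has_bochner_integral_density) (auto simp: prior_sd_square[unfolded power2_eq_square] power2_eq_square)
  then have i: "integrable (prior_coord K) (F k i)"
    and v: "(\<integral>x. F k i x \<partial>prior_coord K) = (if k = k0 \<and> i = i0 then 1 / real K else 1)" for k i
    unfolding F_def by (auto simp: has_bochner_integral_iff N.prob_space)
  show ?thesis
    using has_bochner_integral_theta_prior_coord_prod[of K F, OF K i]
    unfolding eq v prod_prod_delta[OF finite_atLeastAtMost k0] .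
qed

definition sq_norm_sum :: "nat \<Rightarrow> (nat \<Rightarrow> real^'d) \<Rightarrow> real" where
  "sq_norm_sum K \<theta> = (\<Sum>k\<in>{1..K}. (norm (\<theta> k))^2)"

lemma sq_norm_sum_nonneg: "sq_norm_sum K \<theta> \<ge> 0"
  unfolding sq_norm_sum_def by (simp add: sum_nonneg)

lemma sq_norm_sum_coords:
  "sq_norm_sum K \<theta> = (\<Sum>j\<in>{1..K} \<times> UNIV. (\<theta> (fst j) $ snd j)^2)"
  unfolding sq_norm_sum_def power2_norm_eq_inner inner_vec_def sum.cartesian_product
  by (simp add: power2_eq_square case_prod_beta)

lemma has_bochner_integral_theta_prior_sq_norm_sum:
  assumes K: "K > 0"
  shows "has_bochner_integral (theta_prior K :: (nat \<Rightarrow> real^'d::finite) measure)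
           (sq_norm_sum K) (real CARD('d))"
proof -
  have "has_bochner_integral (theta_prior K :: (nat \<Rightarrow> real^'d) measure)
      (\<lambda>\<theta>. \<Sum>j\<in>{1..K} \<times> UNIV. (\<theta> (fst j) $ snd j)^2) (\<Sum>j\<in>{1..K} \<times> (UNIV::'d set). 1 / real K)"
    by (intro has_bochner_integral_sum theta_prior_coord_square[OF K]) auto
  then show ?thesis
    using K by (simp add: sq_norm_sum_coords[abs_def] card_cartesian_product)
qed

section \<open>The shifted Gaussian as a density with respect to the prior\<close>

lemma has_bochner_integral_normal_density_square:
  assumes s: "0 < s"
  shows "has_bochner_integral lborel (\<lambda>x. normal_density a s x * x^2) (s^2 + a^2)"
proof -
  have "has_bochner_integral lborel
      (\<lambda>x. normal_density a s x * (x - a)^2 + 2 * a * (normal_density a s x * (x - a))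
             + a^2 * normal_density a s x) (s^2 + 2 * a * 0 + a^2 * 1)"
    using normal_moment_even[OF s, of a 0] normal_moment_odd[OF s, of a 0]
      normal_moment_even[OF s, of a 1]
    by (intro has_bochner_integral_add has_bochner_integral_mult_right) (auto simp: power2_eq_square)
  then show ?thesis
    by (simp add: power2_eq_square algebra_simps)
qed

lemma ln_normal_density:
  assumes s: "s > 0"
  shows "ln (normal_density a s x) = - ln (sqrt (2 * pi) * s) - (x - a)^2 / (2 * s^2)"
proof -
  have "sqrt (2 * pi * s^2) = sqrt (2 * pi) * s"
    using s by (simp add: real_sqrt_mult)
  then have "normal_density a s x = exp (- ((x - a)^2) / (2 * s^2)) / (sqrt (2 * pi) * s)"
    unfolding normal_density_def by simp
  then show ?thesis
    using s by (simp add: ln_div)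
qed

definition gauss_ratio :: "nat \<Rightarrow> real \<Rightarrow> real \<Rightarrow> real \<Rightarrow> real" where
  "gauss_ratio K s a x = normal_density a s x / normal_density 0 (prior_sd K) x"

lemma gauss_ratio_pos: "K > 0 \<Longrightarrow> s > 0 \<Longrightarrow> gauss_ratio K s a x > 0"
  by (simp add: gauss_ratio_def normal_density_pos prior_sd_pos)

lemma gauss_ratio_measurable [measurable]: "gauss_ratio K s a \<in> borel_measurable borel"
  unfolding gauss_ratio_def[abs_def] by measurable

lemma ln_gauss_ratio:
  assumes K: "K > 0" and s: "s > 0"
  shows "ln (gauss_ratio K s a x) = ln (prior_sd K / s) - (x - a)^2 / (2 * s^2) + real K * x^2 / 2"
proof -
  have sd: "prior_sd K > 0"
    using prior_sd_pos[OF K] .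
  have "ln (gauss_ratio K s a x) = ln (normal_density a s x) - ln (normal_density 0 (prior_sd K) x)"
    unfolding gauss_ratio_def by (rule ln_divide_pos[OF normal_density_pos[OF s] normal_density_pos[OF sd]])
  also have "\<dots> = (ln (sqrt (2 * pi) * prior_sd K) - ln (sqrt (2 * pi) * s))
                  - (x - a)^2 / (2 * s^2) + x^2 / (2 * (prior_sd K)^2)"
    unfolding ln_normal_density[OF s] ln_normal_density[OF sd] by simp
  also have "ln (sqrt (2 * pi) * prior_sd K) - ln (sqrt (2 * pi) * s) = ln (prior_sd K / s)"
    using s sd by (simp add: ln_mult ln_div)
  also have "x^2 / (2 * (prior_sd K)^2) = real K * x^2 / 2"
    using K by (simp add: prior_sd_square)
  finally show ?thesis .
qed

lemma has_bochner_integral_prior_coord_gauss_ratio: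
  assumes K: "K > 0" and s: "s > 0" and [measurable]: "g \<in> borel_measurable borel"
    and g: "has_bochner_integral lborel (\<lambda>x. normal_density a s x * g x) c"
  shows "has_bochner_integral (prior_coord K) (\<lambda>x. gauss_ratio K s a x * g x) c"
  unfolding prior_coord_def
proof (rule has_bochner_integral_density)
  have "normal_density 0 (prior_sd K) x \<noteq> 0" for x
    using normal_density_pos[OF prior_sd_pos[OF K]] by (metis less_irrefl)
  then show "has_bochner_integral lborel
      (\<lambda>x. normal_density 0 (prior_sd K) x *\<^sub>R (gauss_ratio K s a x * g x)) c"
    using g by (simp add: gauss_ratio_def)
qed auto

text \<open>The density of \<open>N(\<theta>, s\<^sup>2 I)\<close> with respect to the prior \<open>N(0, I/K)\<close> on \<open>\<theta>\<^sub>1, \<dots>, \<theta>\<^sub>K\<close>.\<close>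

definition shift_density :: "nat \<Rightarrow> real \<Rightarrow> (nat \<Rightarrow> real^'d) \<Rightarrow> (nat \<Rightarrow> real^'d) \<Rightarrow> real" where
  "shift_density K s \<theta> = coord_prod K (\<lambda>k i. gauss_ratio K s (\<theta> k $ i))"

context
  fixes K :: nat and s :: real and \<theta> :: "nat \<Rightarrow> real^'d::finite"
  assumes K: "K > 0" and s: "s > 0"
begin

lemma shift_density_pos: "shift_density K s \<theta> t > 0"
  unfolding shift_density_def coord_prod_def by (intro prod_pos) (auto intro: gauss_ratio_pos[OF K s])

lemma has_bochner_integral_prior_coord_gauss_ratio_one:
  "has_bochner_integral (prior_coord K) (gauss_ratio K s a) 1"
  using has_bochner_integral_prior_coord_gauss_ratio[OF K s, of "\<lambda>_. 1" a 1]
    normal_moment_even[OF s, of a 0]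
  by simp

lemma has_bochner_integral_shift_density: "has_bochner_integral (theta_prior K) (shift_density K s \<theta>) 1"
  using has_bochner_integral_theta_prior_coord_prod[of K "\<lambda>k i. gauss_ratio K s (\<theta> k $ i)", OF K]
    has_bochner_integral_prior_coord_gauss_ratio_one
  unfolding shift_density_def has_bochner_integral_iff by simp

lemma has_bochner_integral_shift_density_mult_coord:
  assumes k0: "k0 \<in> {1..K}" and [measurable]: "h \<in> borel_measurable borel"
    and h: "has_bochner_integral lborel (\<lambda>x. normal_density (\<theta> k0 $ i0) s x * h x) c"
  shows "has_bochner_integral (theta_prior K) (\<lambda>t. shift_density K s \<theta> t * h (t k0 $ i0)) c"
proof -
  define F where "F = (\<lambda>k i. if k = k0 \<and> i = i0 then (\<lambda>x. gauss_ratio K s (\<theta> k $ i) x * h x)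
                              else gauss_ratio K s (\<theta> k $ i))"
  have eq: "(\<lambda>t. shift_density K s \<theta> t * h (t k0 $ i0)) = coord_prod K F"
    unfolding shift_density_def F_def by (rule ext) (rule coord_prod_mult_coord[OF k0, symmetric])
  have "has_bochner_integral (prior_coord K) (\<lambda>x. gauss_ratio K s (\<theta> k0 $ i0) x * h x) c"
    by (rule has_bochner_integral_prior_coord_gauss_ratio[OF K s _ h]) simp
  then have i: "integrable (prior_coord K) (F k i)"
    and v: "(\<integral>x. F k i x \<partial>prior_coord K) = (if k = k0 \<and> i = i0 then c else 1)" for k i
    using has_bochner_integral_prior_coord_gauss_ratio_one unfolding F_def
    by (auto simp: has_bochner_integral_iff)
  show ?thesis
    using has_bochner_integral_theta_prior_coord_prod[of K F, OF K i]
    unfolding eq v prod_prod_delta[OF finite_atLeastAtMost k0] .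
qed

lemma has_bochner_integral_shift_density_coord_variance:
  "k0 \<in> {1..K} \<Longrightarrow>
   has_bochner_integral (theta_prior K) (\<lambda>t. shift_density K s \<theta> t * (t k0 $ i0 - \<theta> k0 $ i0)^2) (s^2)"
  using normal_moment_even[OF s, of "\<theta> k0 $ i0" 1]
  by (intro has_bochner_integral_shift_density_mult_coord) (auto simp: power2_eq_square)

lemma has_bochner_integral_shift_density_coord_square:
  "k0 \<in> {1..K} \<Longrightarrow>
   has_bochner_integral (theta_prior K) (\<lambda>t. shift_density K s \<theta> t * (t k0 $ i0)^2) (s^2 + (\<theta> k0 $ i0)^2)"
  by (intro has_bochner_integral_shift_density_mult_coord has_bochner_integral_normal_density_square s)
     simp_all

lemma has_bochner_integral_shift_density_coord_covariance:
  assumes k0: "k0 \<in> {1..K}" and k1: "k1 \<in> {1..K}" and ne: "(k0, i0) \<noteq> (k1, i1)"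
  shows "has_bochner_integral (theta_prior K)
           (\<lambda>t. shift_density K s \<theta> t * (t k0 $ i0 - \<theta> k0 $ i0) * (t k1 $ i1 - \<theta> k1 $ i1)) 0"
proof -
  define F0 where "F0 = (\<lambda>k i. if k = k0 \<and> i = i0 then (\<lambda>x. gauss_ratio K s (\<theta> k $ i) x * (x - \<theta> k0 $ i0))
                               else gauss_ratio K s (\<theta> k $ i))"
  define F where "F = (\<lambda>k i. if k = k1 \<and> i = i1 then (\<lambda>x. F0 k i x * (x - \<theta> k1 $ i1)) else F0 k i)"
  have eq: "(\<lambda>t. shift_density K s \<theta> t * (t k0 $ i0 - \<theta> k0 $ i0) * (t k1 $ i1 - \<theta> k1 $ i1))
      = coord_prod K F"
    unfolding shift_density_def F_def F0_def
    by (rule ext) (simp only: coord_prod_mult_coord[OF k1] coord_prod_mult_coord[OF k0])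
  have centred: "has_bochner_integral (prior_coord K) (\<lambda>x. gauss_ratio K s a x * (x - a)) 0" for a
    using normal_moment_odd[OF s, of a 0]
    by (intro has_bochner_integral_prior_coord_gauss_ratio[OF K s]) auto
  have i: "integrable (prior_coord K) (F k i)" for k i
    using centred has_bochner_integral_prior_coord_gauss_ratio_one ne unfolding F_def F0_def
    by (auto simp: has_bochner_integral_iff)
  have "(\<integral>x. F k0 i0 x \<partial>prior_coord K) = 0"
    using centred ne unfolding F_def F0_def by (auto simp: has_bochner_integral_iff)
  then have "(\<Prod>i\<in>UNIV. \<integral>x. F k0 i x \<partial>prior_coord K) = 0"
    by (intro prod_zero) auto
  then have zero: "(\<Prod>k\<in>{1..K}. \<Prod>i\<in>UNIV. \<integral>x. F k i x \<partial>prior_coord K) = 0"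
    using k0 by (intro prod_zero) auto
  show ?thesis
    using has_bochner_integral_theta_prior_coord_prod[of K F, OF K i] unfolding eq zero .
qed

lemma has_bochner_integral_shift_density_linear_square:
  fixes v :: "nat \<Rightarrow> real^'d"
  shows "has_bochner_integral (theta_prior K) (\<lambda>t. shift_density K s \<theta> t * (\<Sum>k\<in>{1..K}. (t k - \<theta> k) \<bullet> v k)^2)
           (s^2 * sq_norm_sum K v)"
proof -
  define J where "J = {1..K} \<times> (UNIV :: 'd set)"
  define c where "c j = v (fst j) $ snd j" for j
  define D where "D j t = t (fst j) $ snd j - \<theta> (fst j) $ snd j" for j and t :: "nat \<Rightarrow> real^'d"
  have "(\<Sum>k\<in>{1..K}. (t k - \<theta> k) \<bullet> v k) = (\<Sum>j\<in>J. c j * D j t)" for t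
    unfolding J_def c_def D_def inner_vec_def sum.cartesian_product
    by (simp add: inner_real_def case_prod_beta algebra_simps)
  then have eq: "(\<lambda>t. shift_density K s \<theta> t * (\<Sum>k\<in>{1..K}. (t k - \<theta> k) \<bullet> v k)^2)
      = (\<lambda>t. \<Sum>j\<in>J. \<Sum>j'\<in>J. c j * c j' * (shift_density K s \<theta> t * D j t * D j' t))"
    by (simp add: power2_eq_square sum_product sum_distrib_left algebra_simps)
  have pair: "has_bochner_integral (theta_prior K) (\<lambda>t. shift_density K s \<theta> t * D j t * D j' t)
                (if j = j' then s^2 else 0)" if "j \<in> J" "j' \<in> J" for j j'
  proof (cases "j = j'")
    case True
    then show ?thesis
      using that has_bochner_integral_shift_density_coord_variance[of "fst j" "snd j"]
      unfolding J_def D_def by (auto simp: power2_eq_square mult.assoc)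
  next
    case False
    then show ?thesis
      using that has_bochner_integral_shift_density_coord_covariance[of "fst j" "fst j'" "snd j" "snd j'"]
      unfolding J_def D_def by (auto simp: prod_eq_iff)
  qed
  have "has_bochner_integral (theta_prior K) (\<lambda>t. \<Sum>j\<in>J. \<Sum>j'\<in>J. c j * c j' * (shift_density K s \<theta> t * D j t * D j' t))
      (\<Sum>j\<in>J. \<Sum>j'\<in>J. c j * c j' * (if j = j' then s^2 else 0))"
    by (intro has_bochner_integral_sum has_bochner_integral_mult_right pair)
  also have "(\<Sum>j\<in>J. \<Sum>j'\<in>J. c j * c j' * (if j = j' then s^2 else 0)) = s^2 * sq_norm_sum K v"
    unfolding sq_norm_sum_coords J_def c_def
    by (simp add: if_distrib sum.delta' sum_distrib_left power2_eq_square mult_ac cong: if_cong)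
  finally show ?thesis
    unfolding eq .
qed

lemma has_bochner_integral_shift_density_entropy:
  "has_bochner_integral (theta_prior K) (\<lambda>t. shift_density K s \<theta> t * ln (shift_density K s \<theta> t))
     (real K * real CARD('d) * (ln (prior_sd K / s) - 1/2 + real K * s^2 / 2)
      + real K / 2 * sq_norm_sum K \<theta>)"
proof -
  define J where "J = {1..K} \<times> (UNIV :: 'd set)"
  let ?w = "shift_density K s \<theta>"
  define T where "T j t = ln (prior_sd K / s) * ?w t
      - (1 / (2 * s^2)) * (?w t * (t (fst j) $ snd j - \<theta> (fst j) $ snd j)^2)
      + (real K / 2) * (?w t * (t (fst j) $ snd j)^2)" for j t
  have eq: "(\<lambda>t. ?w t * ln (?w t)) = (\<lambda>t. \<Sum>j\<in>J. T j t)"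
  proof
    fix t :: "nat \<Rightarrow> real^'d"
    have "ln (?w t) = (\<Sum>k\<in>{1..K}. \<Sum>i\<in>UNIV. ln (gauss_ratio K s (\<theta> k $ i) (t k $ i)))"
      unfolding shift_density_def coord_prod_def
      using gauss_ratio_pos[OF K s] by (simp add: ln_prod prod_zero_iff less_imp_neq[symmetric])
    also have "\<dots> = (\<Sum>j\<in>J. ln (gauss_ratio K s (\<theta> (fst j) $ snd j) (t (fst j) $ snd j)))"
      unfolding J_def sum.cartesian_product by (simp add: case_prod_beta)
    finally show "?w t * ln (?w t) = (\<Sum>j\<in>J. T j t)"
      unfolding T_def by (simp add: sum_distrib_left ln_gauss_ratio[OF K s] algebra_simps)
  qed
  have "has_bochner_integral (theta_prior K) (T j)
      (ln (prior_sd K / s) - 1/2 + real K * s^2 / 2 + real K / 2 * (\<theta> (fst j) $ snd j)^2)"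
    if "j \<in> J" for j
  proof -
    have "has_bochner_integral (theta_prior K) (T j)
        (ln (prior_sd K / s) * 1 - (1 / (2 * s^2)) * s^2 + (real K / 2) * (s^2 + (\<theta> (fst j) $ snd j)^2))"
      unfolding T_def using that
      by (intro has_bochner_integral_add has_bochner_integral_diff has_bochner_integral_mult_right
          has_bochner_integral_shift_density has_bochner_integral_shift_density_coord_variance
          has_bochner_integral_shift_density_coord_square) (auto simp: J_def)
    moreover have "ln (prior_sd K / s) * 1 - (1 / (2 * s^2)) * s^2 + (real K / 2) * (s^2 + (\<theta> (fst j) $ snd j)^2)
        = ln (prior_sd K / s) - 1/2 + real K * s^2 / 2 + real K / 2 * (\<theta> (fst j) $ snd j)^2"
      using s by (simp add: field_simps)
    ultimately show ?thesis
      by (simp only:)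
  qed
  then have "has_bochner_integral (theta_prior K) (\<lambda>t. \<Sum>j\<in>J. T j t)
      (\<Sum>j\<in>J. ln (prior_sd K / s) - 1/2 + real K * s^2 / 2 + real K / 2 * (\<theta> (fst j) $ snd j)^2)"
    by (intro has_bochner_integral_sum)
  then show ?thesis
    unfolding eq sq_norm_sum_coords J_def
    by (simp add: sum.distrib sum_distrib_left card_cartesian_product)
qed

end

lemma sigmoid_pos: "0 < sigmoid z"
  by (simp add: sigmoid_def add_pos_pos)

lemma sigmoid_less_1: "sigmoid z < 1"
  unfolding sigmoid_def by (simp add: add_pos_pos)

lemma one_minus_sigmoid: "1 - sigmoid z = sigmoid (- z)"
proof -
  have "1 + exp (- z) > 0" "1 + exp z > 0"
    by (simp_all add: add_pos_pos)
  then show ?thesis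
    unfolding sigmoid_def by (simp add: field_simps exp_minus)
qed

lemma ln_sigmoid: "ln (sigmoid z) = - ln (1 + exp (- z))"
  unfolding sigmoid_def by (simp add: ln_div add_pos_pos)

lemma DERIV_sigmoid: "DERIV sigmoid x :> sigmoid x * (1 - sigmoid x)"
proof -
  have p: "1 + exp (- x) \<noteq> 0"
    by (simp add: add_pos_pos less_imp_neq[symmetric])
  have "DERIV (\<lambda>x. 1 / (1 + exp (- x))) x :> exp (- x) / (1 + exp (- x))^2"
    using p by (auto intro!: derivative_eq_intros simp: power2_eq_square)
  also have "exp (- x) / (1 + exp (- x))^2 = sigmoid x * (1 - sigmoid x)"
    unfolding sigmoid_def using p by (simp add: field_simps power2_eq_square)
  finally show ?thesis
    unfolding sigmoid_def[abs_def] .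
qed

lemma sigmoid_diff_le:
  assumes "z \<le> w"
  shows "sigmoid w - sigmoid z \<le> (w - z) / 4"
proof (cases "z = w")
  case False
  then have lt: "z < w"
    using assms by simp
  obtain c where c: "sigmoid w - sigmoid z = (w - z) * (sigmoid c * (1 - sigmoid c))"
    using MVT2[OF lt, of sigmoid "\<lambda>x. sigmoid x * (1 - sigmoid x)"] DERIV_sigmoid by blast
  have "sigmoid c * (1 - sigmoid c) = 1/4 - (sigmoid c - 1/2)^2"
    by (simp add: power2_eq_square algebra_simps)
  then have "(w - z) * (sigmoid c * (1 - sigmoid c)) \<le> (w - z) * (1/4)"
    using lt by (intro mult_left_mono) simp_all
  then show ?thesis
    unfolding c by simp
qed simp

text \<open>Cross entropy of the label distribution \<open>(p, 1 - p)\<close> against the prediction \<open>sigmoid w\<close>.\<close>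

definition logistic_loss :: "real \<Rightarrow> real \<Rightarrow> real" where
  "logistic_loss p w = p * ln (1 + exp (- w)) + (1 - p) * ln (1 + exp w)"

lemma DERIV_logistic_loss: "DERIV (logistic_loss p) w :> sigmoid w - p"
proof -
  have pos: "1 + exp (- w) > 0" "1 + exp w > 0"
    by (simp_all add: add_pos_pos)
  have "DERIV (logistic_loss p) w :> p * (- exp (- w) / (1 + exp (- w))) + (1 - p) * (exp w / (1 + exp w))"
    unfolding logistic_loss_def[abs_def]
    using pos by (auto intro!: derivative_eq_intros simp: mult_ac)
  moreover have "exp (- w) / (1 + exp (- w)) = 1 - sigmoid w" "exp w / (1 + exp w) = sigmoid w"
    unfolding sigmoid_def using pos by (simp_all add: field_simps exp_minus)
  ultimately show ?thesis
    by (simp add: algebra_simps)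
qed

lemma kl_bern_sigmoid:
  "kl_bern (sigmoid z) (sigmoid w) = logistic_loss (sigmoid z) w - logistic_loss (sigmoid z) z"
proof -
  define p where "p = sigmoid z"
  have p: "0 < p" "p < 1"
    unfolding p_def by (rule sigmoid_pos, rule sigmoid_less_1)
  have ln1: "ln (1 - sigmoid w) = - ln (1 + exp w)" for w
    by (simp add: one_minus_sigmoid ln_sigmoid)
  have "kl_bern p (sigmoid w) = p * ln p + (1 - p) * ln (1 - p) + logistic_loss p w"
    unfolding kl_bern_def logistic_loss_def using p sigmoid_pos[of w] sigmoid_less_1[of w]
    by (simp add: ln_div ln_sigmoid ln1 algebra_simps)
  moreover have "p * ln p + (1 - p) * ln (1 - p) + logistic_loss p z = 0"
    unfolding logistic_loss_def p_def by (simp add: ln_sigmoid ln1 algebra_simps)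
  ultimately show ?thesis
    unfolding p_def by linarith
qed

text \<open>Since \<open>sigmoid' \<le> 1/4\<close>, the logistic loss is \<open>1/4\<close>-smooth; this is the quadratic upper bound
  it implies around its minimiser \<open>z\<close>.\<close>

lemma kl_bern_sigmoid_le: "kl_bern (sigmoid z) (sigmoid w) \<le> (w - z)^2 / 8"
proof -
  define p where "p = sigmoid z"
  define g where "g x = (x - z)^2 / 8 - (logistic_loss p x - logistic_loss p z)" for x
  have g': "DERIV g x :> (x - z) / 4 - (sigmoid x - p)" for x
    unfolding g_def[abs_def] by (auto intro!: derivative_eq_intros DERIV_logistic_loss)
  have "g z = 0"
    unfolding g_def by simp
  have "g w \<ge> 0"
  proof (cases w z rule: linorder_cases)
    case less
    obtain c where c: "w < c" "c < z" "g z - g w = (z - w) * ((c - z) / 4 - (sigmoid c - p))"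
      using MVT2[OF less, of g "\<lambda>x. (x - z) / 4 - (sigmoid x - p)"] g' by blast
    have "sigmoid z - sigmoid c \<le> (z - c) / 4"
      using sigmoid_diff_le[of c z] c by simp
    then have "(c - z) / 4 - (sigmoid c - p) \<le> 0"
      unfolding p_def by simp
    then have "g z - g w \<le> 0"
      using c less by (simp add: mult_nonneg_nonpos)
    then show ?thesis
      using \<open>g z = 0\<close> by simp
  next
    case greater
    obtain c where c: "z < c" "c < w" "g w - g z = (w - z) * ((c - z) / 4 - (sigmoid c - p))"
      using MVT2[OF greater, of g "\<lambda>x. (x - z) / 4 - (sigmoid x - p)"] g' by blast
    have "sigmoid c - sigmoid z \<le> (c - z) / 4"
      using sigmoid_diff_le[of z c] c by simp
    then show ?thesis
      using c greater \<open>g z = 0\<close> unfolding p_def by simp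
  qed (simp add: \<open>g z = 0\<close>)
  then show ?thesis
    using kl_bern_sigmoid[of z w] unfolding g_def p_def by simp
qed

lemma abs_ln_sigmoid_le: "\<bar>ln (sigmoid z)\<bar> \<le> 1 + \<bar>z\<bar>"
proof -
  have "exp (- z) \<le> exp \<bar>z\<bar>" and "1 \<le> exp \<bar>z\<bar>"
    by simp_all
  then have "1 + exp (- z) \<le> 2 * exp \<bar>z\<bar>"
    by linarith
  also have "\<dots> \<le> exp (1 + \<bar>z\<bar>)"
    using exp_ge_add_one_self[of 1] by (simp add: exp_add)
  finally have "ln (1 + exp (- z)) \<le> ln (exp (1 + \<bar>z\<bar>))"
    by (subst ln_le_cancel_iff) (auto simp: add_pos_pos)
  then have "ln (1 + exp (- z)) \<le> 1 + \<bar>z\<bar>"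
    by simp
  moreover have "0 \<le> ln (1 + exp (- z))"
    by simp
  ultimately show ?thesis
    by (simp add: ln_sigmoid)
qed

lemma abs_mult_ln_le_1:
  fixes x :: real
  assumes "0 < x" "x \<le> 1"
  shows "\<bar>x * ln x\<bar> \<le> 1"
proof -
  have "- ln x \<le> 1 / x - 1"
    using ln_le_minus_one[of "1 / x"] assms by (simp add: ln_div)
  then have "x * (- ln x) \<le> 1 - x"
    using assms mult_left_mono[of "- ln x" "1 / x - 1" x] by (simp add: field_simps)
  moreover have "x * ln x \<le> 0"
    using assms by (simp add: mult_nonneg_nonpos)
  ultimately show ?thesis
    using assms by (simp add: abs_if)
qed

lemma abs_kl_bern_le:
  assumes p: "0 < p" "p < 1" and q: "0 < q" "q < 1"
  shows "\<bar>kl_bern p q\<bar> \<le> 2 + \<bar>ln q\<bar> + \<bar>ln (1 - q)\<bar>"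
proof -
  have "kl_bern p q = p * ln p + (1 - p) * ln (1 - p) - p * ln q - (1 - p) * ln (1 - q)"
    unfolding kl_bern_def using p q by (simp add: ln_div algebra_simps)
  moreover have "\<bar>p * ln p\<bar> \<le> 1" "\<bar>(1 - p) * ln (1 - p)\<bar> \<le> 1"
    using p by (auto intro: abs_mult_ln_le_1)
  moreover have "\<bar>p * ln q\<bar> \<le> \<bar>ln q\<bar>" "\<bar>(1 - p) * ln (1 - q)\<bar> \<le> \<bar>ln (1 - q)\<bar>"
    using p by (auto simp: abs_mult intro!: mult_left_le_one_le)
  ultimately show ?thesis
    by linarith
qed

lemma (in prob_space) integral_pos:
  fixes f :: "'a \<Rightarrow> real"
  assumes "integrable M f" and "\<And>x. f x > 0"
  shows "(\<integral>x. f x \<partial>M) > 0"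
proof -
  have "(\<integral>x. f x \<partial>M) \<noteq> 0"
  proof
    assume "(\<integral>x. f x \<partial>M) = 0"
    then have "AE x in M. f x = 0"
      using assms by (subst integral_nonneg_eq_0_iff_AE[symmetric]) (auto intro: less_imp_le)
    then show False
      using assms(2) AE_False by (auto elim: AE_mp simp: less_le)
  qed
  moreover have "(\<integral>x. f x \<partial>M) \<ge> 0"
    using assms(2) by (simp add: less_imp_le)
  ultimately show ?thesis
    by simp
qed

text \<open>It follows pointwise from \<open>ln y \<le> y - 1\<close> at \<open>y = f / (w \<integral>f)\<close>.\<close>

lemma ln_integral_ge_relative_entropy:
  fixes f w :: "'a \<Rightarrow> real"
  assumes f: "integrable M f" "\<And>x. f x > 0" "(\<integral>x. f x \<partial>M) > 0"
    and w: "has_bochner_integral M w 1" "\<And>x. w x > 0"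
    and wf: "integrable M (\<lambda>x. w x * ln (f x))" and ww: "integrable M (\<lambda>x. w x * ln (w x))"
  shows "(\<integral>x. w x * ln (f x) \<partial>M) - (\<integral>x. w x * ln (w x) \<partial>M) \<le> ln (\<integral>x. f x \<partial>M)"
proof -
  define I where "I = (\<integral>x. f x \<partial>M)"
  have I: "I > 0"
    unfolding I_def by (rule f(3))
  have pointwise: "w x * ln (f x) - w x * ln (w x) \<le> ln I * w x + f x / I - w x" for x
  proof -
    have "ln (f x / (w x * I)) \<le> f x / (w x * I) - 1"
      using f(2)[of x] w(2)[of x] I by (intro ln_le_minus_one) simp
    then have "w x * (ln (f x) - ln (w x) - ln I) \<le> w x * (f x / (w x * I) - 1)"
      using f(2)[of x] w(2)[of x] I by (intro mult_left_mono) (auto simp: ln_div ln_mult)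
    moreover have "w x * (f x / (w x * I) - 1) = f x / I - w x"
      using w(2)[of x] I by (simp add: field_simps)
    ultimately show ?thesis
      by (simp add: algebra_simps)
  qed
  have wi: "integrable M w" "(\<integral>x. w x \<partial>M) = 1"
    using w(1) by (simp_all add: has_bochner_integral_iff)
  have "(\<integral>x. w x * ln (f x) - w x * ln (w x) \<partial>M) \<le> (\<integral>x. ln I * w x + f x / I - w x \<partial>M)"
    using pointwise wf ww wi f(1) by (intro integral_mono) auto
  also have "\<dots> = ln I"
    using wi f(1) I by (simp add: I_def)
  finally show ?thesis
    using wf ww by (simp add: I_def)
qed

lemma sum_lists_length_Suc:
  fixes F :: "bool list \<Rightarrow> 'a::comm_monoid_add"
  shows "(\<Sum>h\<in>{h. length h = Suc n}. F h) = (\<Sum>h\<in>{h. length h = n}. F (h @ [True]) + F (h @ [False]))"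
proof -
  have im: "{h :: bool list. length h = Suc n} = (\<lambda>(h, b). h @ [b]) ` ({h. length h = n} \<times> UNIV)"
  proof (rule set_eqI, rule iffI)
    fix x :: "bool list"
    assume "x \<in> {h. length h = Suc n}"
    then have "x = butlast x @ [last x]" "length (butlast x) = n"
      by (auto intro: append_butlast_last_id[symmetric])
    then show "x \<in> (\<lambda>(h, b). h @ [b]) ` ({h. length h = n} \<times> UNIV)"
      by (metis (mono_tags, lifting) UNIV_I case_prod_conv image_eqI mem_Collect_eq mem_Sigma_iff)
  qed auto
  have "inj_on (\<lambda>(h :: bool list, b :: bool). h @ [b]) ({h. length h = n} \<times> UNIV)"
    by (auto simp: inj_on_def)
  then have "(\<Sum>h\<in>{h. length h = Suc n}. F h) = (\<Sum>h\<in>{h :: bool list. length h = n}. \<Sum>b\<in>UNIV. F (h @ [b]))"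
    unfolding im by (subst sum.reindex) (simp_all add: sum.cartesian_product case_prod_beta)
  then show ?thesis
    by (simp add: UNIV_bool add.commute)
qed

definition kl_lists :: "nat \<Rightarrow> (bool list \<Rightarrow> real) \<Rightarrow> (bool list \<Rightarrow> real) \<Rightarrow> real" where
  "kl_lists n P Q = (\<Sum>h\<in>{h. length h = n}. P h * ln (P h / Q h))"

lemma kl_lists_Suc:
  fixes P Q p q :: "bool list \<Rightarrow> real"
  assumes pos: "\<And>h. length h = n \<Longrightarrow> P h > 0 \<and> Q h > 0 \<and> 0 < p h \<and> p h < 1 \<and> 0 < q h \<and> q h < 1"
    and P: "\<And>h. length h = n \<Longrightarrow> P (h @ [True]) = P h * p h \<and> P (h @ [False]) = P h * (1 - p h)"
    and Q: "\<And>h. length h = n \<Longrightarrow> Q (h @ [True]) = Q h * q h \<and> Q (h @ [False]) = Q h * (1 - q h)"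
  shows "kl_lists (Suc n) P Q = kl_lists n P Q + (\<Sum>h\<in>{h. length h = n}. P h * kl_bern (p h) (q h))"
  unfolding kl_lists_def sum_lists_length_Suc sum.distrib[symmetric]
proof (rule sum.cong)
  fix h :: "bool list"
  assume "h \<in> {h. length h = n}"
  then have h: "length h = n"
    by simp
  have split: "(P * p) * ln ((P * p) / (Q * q)) + (P * (1 - p)) * ln ((P * (1 - p)) / (Q * (1 - q)))
      = P * ln (P / Q) + P * kl_bern p q"
    if "P > 0" "Q > 0" "0 < p" "p < 1" "0 < q" "q < 1" for P Q p q :: real
  proof -
    have "ln ((P * p) / (Q * q)) = ln (P / Q) + ln (p / q)"
      "ln ((P * (1 - p)) / (Q * (1 - q))) = ln (P / Q) + ln ((1 - p) / (1 - q))"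
      using that by (simp_all add: ln_div ln_mult)
    then show ?thesis
      unfolding kl_bern_def by (simp add: algebra_simps)
  qed
  show "P (h @ [True]) * ln (P (h @ [True]) / Q (h @ [True]))
      + P (h @ [False]) * ln (P (h @ [False]) / Q (h @ [False]))
      = P h * ln (P h / Q h) + P h * kl_bern (p h) (q h)"
    using P[OF h] Q[OF h] pos[OF h] split[of "P h" "Q h" "p h" "q h"] by simp
qed simp

lemma next_prob_pos: "0 < next_prob \<Phi>0 \<Phi>1 K \<theta> h"
  unfolding next_prob_def ar_prob_def Let_def by (simp add: sigmoid_pos)

lemma next_prob_less_1: "next_prob \<Phi>0 \<Phi>1 K \<theta> h < 1"
  unfolding next_prob_def ar_prob_def Let_def by (simp add: sigmoid_less_1)

lemma hist_lik_pos: "0 < hist_lik \<Phi>0 \<Phi>1 K \<theta> h"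
  unfolding hist_lik_def ar_prob_def using sigmoid_pos sigmoid_less_1
  by (intro mult_pos_pos prod_pos) (auto simp: algebra_simps)

lemma hist_lik_le_1: "hist_lik \<Phi>0 \<Phi>1 K \<theta> h \<le> 1"
  unfolding hist_lik_def ar_prob_def using sigmoid_pos sigmoid_less_1
  by (intro mult_le_one prod_nonneg prod_le_1) (auto simp: power_le_one less_imp_le)

lemma hist_lik_snoc:
  assumes K: "K > 0" and h: "length h \<ge> 1"
  shows "hist_lik \<Phi>0 \<Phi>1 K \<theta> (h @ [b]) = hist_lik \<Phi>0 \<Phi>1 K \<theta> h *
           (if b then next_prob \<Phi>0 \<Phi>1 K \<theta> h else 1 - next_prob \<Phi>0 \<Phi>1 K \<theta> h)"
proof (cases "length h < K")
  case True
  then have "{K - 1..<length (h @ [b]) - 1} = {}" "{K - 1..<length h - 1} = {}"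
    and "next_prob \<Phi>0 \<Phi>1 K \<theta> h = 1/2"
    and "min K (length (h @ [b])) = Suc (length h)" "min K (length h) = length h"
    using h unfolding next_prob_def Let_def by auto
  then show ?thesis
    unfolding hist_lik_def by simp
next
  case False
  define n where "n = length h"
  have nK: "K \<le> n"
    using False n_def by simp
  define f where "f g s = (if g ! (s + 1) then ar_prob \<Phi>0 \<Phi>1 K \<theta> (take (s + 1) g) s
                           else 1 - ar_prob \<Phi>0 \<Phi>1 K \<theta> (take (s + 1) g) s)" for g s
  have lik: "hist_lik \<Phi>0 \<Phi>1 K \<theta> g = (1/2)^(min K (length g)) * prod (f g) {K - 1..<length g - 1}" for g
    unfolding hist_lik_def f_def by simp
  have "{K - 1..<length (h @ [b]) - 1} = insert (n - 1) {K - 1..<n - 1}"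
    using nK K h n_def by auto
  moreover have "f (h @ [b]) s = f h s" if "s \<in> {K - 1..<n - 1}" for s
    using that n_def unfolding f_def by (auto simp: nth_append)
  moreover have "f (h @ [b]) (n - 1) = (if b then next_prob \<Phi>0 \<Phi>1 K \<theta> h else 1 - next_prob \<Phi>0 \<Phi>1 K \<theta> h)"
    using nK K h n_def unfolding f_def next_prob_def Let_def by (auto simp: nth_append)
  ultimately show ?thesis
    unfolding lik using nK n_def by (simp add: min_def)
qed

lemma hist_lik_length_1: "K > 0 \<Longrightarrow> length h = 1 \<Longrightarrow> hist_lik \<Phi>0 \<Phi>1 K \<theta> h = 1/2"
  unfolding hist_lik_def by simp

lemma sum_hist_lik:
  assumes K: "K > 0" and n: "n \<ge> 1"
  shows "(\<Sum>h\<in>{h. length h = n}. hist_lik \<Phi>0 \<Phi>1 K \<theta> h) = 1"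
  using n
proof (induction n rule: dec_induct)
  case base
  have "{h :: bool list. length h = 0} = {[]}"
    by auto
  then show ?case
    using sum_lists_length_Suc[of "hist_lik \<Phi>0 \<Phi>1 K \<theta>" 0] by (simp add: hist_lik_length_1[OF K])
next
  case (step n)
  then show ?case
    unfolding sum_lists_length_Suc by (simp add: hist_lik_snoc[OF K] algebra_simps)
qed

lemma measurable_theta_prior_component:
  assumes "k \<in> {1..K}"
  shows "(\<lambda>\<theta>. \<theta> k) \<in> measurable (theta_prior K :: (nat \<Rightarrow> real^'d::finite) measure) borel"
proof -
  have "(\<lambda>\<theta>. \<theta> k) \<in> measurable (theta_prior K :: (nat \<Rightarrow> real^'d) measure) (gauss_prior K)"
    unfolding theta_prior_def using assms by (rule measurable_component_singleton)
  moreover have "sets (gauss_prior K :: (real^'d) measure) = sets borel"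
    unfolding gauss_prior_def by simp
  ultimately show ?thesis
    using measurable_cong_sets by blast
qed

lemma sigmoid_measurable [measurable]: "sigmoid \<in> borel_measurable borel"
  unfolding sigmoid_def[abs_def] by measurable

lemma next_prob_measurable [measurable]:
  "(\<lambda>\<theta>. next_prob \<Phi>0 \<Phi>1 K \<theta> h) \<in> borel_measurable (theta_prior K :: (nat \<Rightarrow> real^'d::finite) measure)"
  and hist_lik_measurable [measurable]:
  "(\<lambda>\<theta>. hist_lik \<Phi>0 \<Phi>1 K \<theta> h) \<in> borel_measurable (theta_prior K :: (nat \<Rightarrow> real^'d::finite) measure)"
proof -
  have lin: "(\<lambda>\<theta>. \<Sum>k\<in>{1..K}. \<theta> k \<bullet> v k) \<in> borel_measurable (theta_prior K :: (nat \<Rightarrow> real^'d) measure)"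
    for v :: "nat \<Rightarrow> real^'d"
    by (intro borel_measurable_sum borel_measurable_inner measurable_theta_prior_component) auto
  then have ar: "(\<lambda>\<theta>. ar_prob \<Phi>0 \<Phi>1 K \<theta> g t) \<in> borel_measurable (theta_prior K :: (nat \<Rightarrow> real^'d) measure)"
    for g t
    unfolding ar_prob_def by (rule measurable_compose) measurable
  then show "(\<lambda>\<theta>. next_prob \<Phi>0 \<Phi>1 K \<theta> h) \<in> borel_measurable (theta_prior K :: (nat \<Rightarrow> real^'d) measure)"
    unfolding next_prob_def Let_def by simp
  show "(\<lambda>\<theta>. hist_lik \<Phi>0 \<Phi>1 K \<theta> h) \<in> borel_measurable (theta_prior K :: (nat \<Rightarrow> real^'d) measure)"
    unfolding hist_lik_def using ar by measurable
qed

text \<open>The logit of \<open>X\<^sub>t\<^sub>+\<^sub>1\<close> given \<open>H\<^sub>t = h\<close>; only meaningful once \<open>length h \<ge> K\<close>.\<close>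

definition logit :: "real^'d \<Rightarrow> real^'d \<Rightarrow> nat \<Rightarrow> (nat \<Rightarrow> real^'d) \<Rightarrow> bool list \<Rightarrow> real" where
  "logit \<Phi>0 \<Phi>1 K \<theta> h = (\<Sum>k\<in>{1..K}. \<theta> k \<bullet> feat \<Phi>0 \<Phi>1 (h ! (length h - k)))"

lemma next_prob_eq_sigmoid_logit:
  "K > 0 \<Longrightarrow> K \<le> length h \<Longrightarrow> next_prob \<Phi>0 \<Phi>1 K \<theta> h = sigmoid (logit \<Phi>0 \<Phi>1 K \<theta> h)"
  unfolding next_prob_def Let_def ar_prob_def logit_def by auto

lemma next_prob_eq_half: "length h < K \<Longrightarrow> length h \<ge> 1 \<Longrightarrow> next_prob \<Phi>0 \<Phi>1 K \<theta> h = 1/2"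
  unfolding next_prob_def Let_def by auto

lemma logit_diff:
  "logit \<Phi>0 \<Phi>1 K \<theta> h - logit \<Phi>0 \<Phi>1 K t h = - (\<Sum>k\<in>{1..K}. (t k - \<theta> k) \<bullet> feat \<Phi>0 \<Phi>1 (h ! (length h - k)))"
  unfolding logit_def by (simp add: sum_subtractf[symmetric] inner_diff_left sum_negf[symmetric])

lemma norm_feat: "norm \<Phi>0 = 1 \<Longrightarrow> norm \<Phi>1 = 1 \<Longrightarrow> norm (feat \<Phi>0 \<Phi>1 b) = 1"
  unfolding feat_def by auto

lemma abs_sum_inner_unit_le:
  fixes t v :: "nat \<Rightarrow> 'a::real_inner"
  assumes v: "\<And>k. norm (v k) = 1"
  shows "\<bar>\<Sum>k\<in>{1..K}. t k \<bullet> v k\<bar> \<le> real K + (\<Sum>k\<in>{1..K}. (norm (t k))^2)"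
proof -
  have "\<bar>t k \<bullet> v k\<bar> \<le> 1 + (norm (t k))^2" for k
  proof -
    have "\<bar>t k \<bullet> v k\<bar> \<le> norm (t k)"
      using Cauchy_Schwarz_ineq2[of "t k" "v k"] v by simp
    moreover have "norm (t k) \<le> 1 + (norm (t k))^2"
      using sum_squares_ge_zero[of "norm (t k) - 1/2" 0] by (simp add: power2_eq_square algebra_simps)
    ultimately show ?thesis
      by linarith
  qed
  then have "\<bar>\<Sum>k\<in>{1..K}. t k \<bullet> v k\<bar> \<le> (\<Sum>k\<in>{1..K}. 1 + (norm (t k))^2)"
    by (intro order.trans[OF sum_abs] sum_mono)
  then show ?thesis
    by (simp add: sum.distrib)
qed

section \<open>The estimation error as a mutual information\<close>

context
  fixes \<Phi>0 \<Phi>1 :: "real^'d::finite" and K :: nat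
  assumes K: "K > 0" and \<Phi>0: "norm \<Phi>0 = 1" and \<Phi>1: "norm \<Phi>1 = 1"
begin

abbreviation "lik \<theta> h \<equiv> hist_lik \<Phi>0 \<Phi>1 K \<theta> h"
abbreviation "nx \<theta> h \<equiv> next_prob \<Phi>0 \<Phi>1 K \<theta> h"
abbreviation "marg h \<equiv> (\<integral>\<theta>. lik \<theta> h \<partial>theta_prior K)"

lemma integrable_hist_lik: "integrable (theta_prior K) (\<lambda>\<theta>. lik \<theta> h)"
proof -
  interpret prob_space "theta_prior K :: (nat \<Rightarrow> real^'d) measure"
    by (rule prob_space_theta_prior[OF K])
  have "\<bar>lik \<theta> h\<bar> \<le> 1" for \<theta>
    using hist_lik_pos[of \<Phi>0 \<Phi>1 K \<theta> h] hist_lik_le_1[of \<Phi>0 \<Phi>1 K \<theta> h] by simp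
  then show ?thesis
    by (intro integrable_const_bound[where B=1]) auto
qed

lemma integrable_hist_lik_next_prob: "integrable (theta_prior K) (\<lambda>\<theta>. lik \<theta> h * nx \<theta> h)"
proof -
  interpret prob_space "theta_prior K :: (nat \<Rightarrow> real^'d) measure"
    by (rule prob_space_theta_prior[OF K])
  have "\<bar>lik \<theta> h * nx \<theta> h\<bar> \<le> 1" for \<theta>
    using hist_lik_le_1[of \<Phi>0 \<Phi>1 K \<theta> h] hist_lik_pos[of \<Phi>0 \<Phi>1 K \<theta> h]
      next_prob_pos[of \<Phi>0 \<Phi>1 K \<theta> h] next_prob_less_1[of \<Phi>0 \<Phi>1 K \<theta> h]
    by (simp add: abs_mult mult_le_one)
  then show ?thesis
    by (intro integrable_const_bound[where B=1]) auto
qed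

lemma marginal_pos: "marg h > 0"
  using prob_space.integral_pos[OF prob_space_theta_prior[OF K] integrable_hist_lik hist_lik_pos] .

lemma marginal_snoc:
  assumes h: "length h \<ge> 1"
  shows "marg (h @ [True]) = marg h * pred_prob \<Phi>0 \<Phi>1 K h"
    and "marg (h @ [False]) = marg h * (1 - pred_prob \<Phi>0 \<Phi>1 K h)"
    and "0 < pred_prob \<Phi>0 \<Phi>1 K h" and "pred_prob \<Phi>0 \<Phi>1 K h < 1"
proof -
  have T: "marg (h @ [True]) = (\<integral>\<theta>. lik \<theta> h * nx \<theta> h \<partial>theta_prior K)"
    by (simp add: hist_lik_snoc[OF K h])
  have F: "marg (h @ [False]) = marg h - (\<integral>\<theta>. lik \<theta> h * nx \<theta> h \<partial>theta_prior K)"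
    by (simp add: hist_lik_snoc[OF K h] right_diff_distrib integrable_hist_lik integrable_hist_lik_next_prob)
  have pred: "pred_prob \<Phi>0 \<Phi>1 K h = (\<integral>\<theta>. lik \<theta> h * nx \<theta> h \<partial>theta_prior K) / marg h"
    unfolding pred_prob_def ..
  show "marg (h @ [True]) = marg h * pred_prob \<Phi>0 \<Phi>1 K h"
    unfolding T pred using marginal_pos[of h] by simp
  show "marg (h @ [False]) = marg h * (1 - pred_prob \<Phi>0 \<Phi>1 K h)"
    unfolding F pred using marginal_pos[of h] by (simp add: field_simps)
  show "0 < pred_prob \<Phi>0 \<Phi>1 K h"
    unfolding pred using marginal_pos[of h] marginal_pos[of "h @ [True]"] T by simp
  show "pred_prob \<Phi>0 \<Phi>1 K h < 1"
    unfolding pred using marginal_pos[of h] marginal_pos[of "h @ [False]"] F by simp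
qed

lemma integrable_kl_lists_marginal: "integrable (theta_prior K) (\<lambda>\<theta>. kl_lists n (lik \<theta>) marg)"
proof -
  interpret prob_space "theta_prior K :: (nat \<Rightarrow> real^'d) measure"
    by (rule prob_space_theta_prior[OF K])
  have "integrable (theta_prior K) (\<lambda>\<theta>. lik \<theta> h * ln (lik \<theta> h / marg h))" for h
  proof (rule integrable_const_bound[where B="1 + \<bar>ln (marg h)\<bar>"])
    show "AE \<theta> in theta_prior K. norm (lik \<theta> h * ln (lik \<theta> h / marg h)) \<le> 1 + \<bar>ln (marg h)\<bar>"
    proof (rule AE_I2)
      fix \<theta>
      have l: "0 < lik \<theta> h" "lik \<theta> h \<le> 1"
        by (rule hist_lik_pos, rule hist_lik_le_1)
      have "lik \<theta> h * ln (lik \<theta> h / marg h) = lik \<theta> h * ln (lik \<theta> h) - lik \<theta> h * ln (marg h)"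
        using l marginal_pos[of h] by (simp add: ln_div algebra_simps)
      moreover have "\<bar>lik \<theta> h * ln (lik \<theta> h)\<bar> \<le> 1"
        using l by (rule abs_mult_ln_le_1)
      moreover have "\<bar>lik \<theta> h * ln (marg h)\<bar> \<le> \<bar>ln (marg h)\<bar>"
        using l by (simp add: abs_mult mult_left_le_one_le)
      ultimately show "norm (lik \<theta> h * ln (lik \<theta> h / marg h)) \<le> 1 + \<bar>ln (marg h)\<bar>"
        by simp
    qed
  qed measurable
  then show ?thesis
    unfolding kl_lists_def by (rule Bochner_Integration.integrable_sum)
qed

lemma integrable_hist_lik_kl_bern:
  assumes c: "0 < c" "c < 1"
  shows "integrable (theta_prior K) (\<lambda>\<theta>. lik \<theta> h * kl_bern (nx \<theta> h) c)"
proof -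
  interpret prob_space "theta_prior K :: (nat \<Rightarrow> real^'d) measure"
    by (rule prob_space_theta_prior[OF K])
  have "\<bar>lik \<theta> h * kl_bern (nx \<theta> h) c\<bar> \<le> 2 + \<bar>ln c\<bar> + \<bar>ln (1 - c)\<bar>" for \<theta>
  proof -
    have "\<bar>lik \<theta> h * kl_bern (nx \<theta> h) c\<bar> \<le> \<bar>kl_bern (nx \<theta> h) c\<bar>"
      using hist_lik_pos[of \<Phi>0 \<Phi>1 K \<theta> h] hist_lik_le_1[of \<Phi>0 \<Phi>1 K \<theta> h]
      by (simp add: abs_mult mult_left_le_one_le)
    also have "\<dots> \<le> 2 + \<bar>ln c\<bar> + \<bar>ln (1 - c)\<bar>"
      by (rule abs_kl_bern_le[OF next_prob_pos next_prob_less_1 c])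
    finally show ?thesis .
  qed
  then show ?thesis
    by (intro integrable_const_bound[where B="2 + \<bar>ln c\<bar> + \<bar>ln (1 - c)\<bar>"])
       (auto simp: kl_bern_def)
qed

lemma kl_lists_marginal_Suc:
  assumes n: "n \<ge> 1"
  shows "kl_lists (Suc n) (lik \<theta>) marg
           = kl_lists n (lik \<theta>) marg + (\<Sum>h\<in>{h. length h = n}. lik \<theta> h * kl_bern (nx \<theta> h) (pred_prob \<Phi>0 \<Phi>1 K h))"
proof (rule kl_lists_Suc)
  fix h :: "bool list"
  assume "length h = n"
  then have h: "length h \<ge> 1"
    using n by simp
  show "lik \<theta> h > 0 \<and> marg h > 0 \<and> 0 < nx \<theta> h \<and> nx \<theta> h < 1
        \<and> 0 < pred_prob \<Phi>0 \<Phi>1 K h \<and> pred_prob \<Phi>0 \<Phi>1 K h < 1"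
    using hist_lik_pos marginal_pos next_prob_pos next_prob_less_1 marginal_snoc(3,4)[OF h] by auto
  show "lik \<theta> (h @ [True]) = lik \<theta> h * nx \<theta> h \<and> lik \<theta> (h @ [False]) = lik \<theta> h * (1 - nx \<theta> h)"
    by (simp add: hist_lik_snoc[OF K h])
  show "marg (h @ [True]) = marg h * pred_prob \<Phi>0 \<Phi>1 K h
        \<and> marg (h @ [False]) = marg h * (1 - pred_prob \<Phi>0 \<Phi>1 K h)"
    using marginal_snoc(1,2)[OF h] by simp
qed

lemma integral_kl_lists_marginal_Suc:
  assumes n: "n \<ge> 1"
  shows "(\<integral>\<theta>. kl_lists (Suc n) (lik \<theta>) marg \<partial>theta_prior K)
           = (\<integral>\<theta>. kl_lists n (lik \<theta>) marg \<partial>theta_prior K)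
             + (\<Sum>h\<in>{h. length h = n}. \<integral>\<theta>. lik \<theta> h * kl_bern (nx \<theta> h) (pred_prob \<Phi>0 \<Phi>1 K h) \<partial>theta_prior K)"
proof -
  have i: "integrable (theta_prior K) (\<lambda>\<theta>. lik \<theta> h * kl_bern (nx \<theta> h) (pred_prob \<Phi>0 \<Phi>1 K h))"
    if "length h = n" for h
    using marginal_snoc(3,4)[of h] n that by (intro integrable_hist_lik_kl_bern) auto
  then have "(\<integral>\<theta>. (\<Sum>h\<in>{h. length h = n}. lik \<theta> h * kl_bern (nx \<theta> h) (pred_prob \<Phi>0 \<Phi>1 K h)) \<partial>theta_prior K)
      = (\<Sum>h\<in>{h. length h = n}. \<integral>\<theta>. lik \<theta> h * kl_bern (nx \<theta> h) (pred_prob \<Phi>0 \<Phi>1 K h) \<partial>theta_prior K)"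
    by (intro Bochner_Integration.integral_sum) simp
  with i show ?thesis
    unfolding kl_lists_marginal_Suc[OF n]
    by (subst Bochner_Integration.integral_add) (auto intro: integrable_kl_lists_marginal)
qed

lemma kl_lists_marginal_1: "kl_lists 1 (lik \<theta>) marg = 0"
proof -
  interpret prob_space "theta_prior K :: (nat \<Rightarrow> real^'d) measure"
    by (rule prob_space_theta_prior[OF K])
  show ?thesis
    unfolding kl_lists_def by (intro sum.neutral) (simp add: hist_lik_length_1[OF K] prob_space)
qed

text \<open>By the chain rule the expected per-step divergences telescope into the divergence between
  the laws of the whole history with and without knowledge of \<open>\<theta>\<close>.\<close>

lemma est_error_eq_integral_kl_lists:
  assumes T: "T > 0"
  shows "est_error \<Phi>0 \<Phi>1 K T = (\<integral>\<theta>. kl_lists (T + 1) (lik \<theta>) marg \<partial>theta_prior K) / real T"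
proof -
  have "(\<Sum>t<T. \<Sum>h\<in>{h :: bool list. length h = t + 1}.
          \<integral>\<theta>. lik \<theta> h * kl_bern (nx \<theta> h) (pred_prob \<Phi>0 \<Phi>1 K h) \<partial>theta_prior K)
      = (\<Sum>t<T. (\<integral>\<theta>. kl_lists (Suc (t + 1)) (lik \<theta>) marg \<partial>theta_prior K)
                - (\<integral>\<theta>. kl_lists (t + 1) (lik \<theta>) marg \<partial>theta_prior K))"
    by (intro sum.cong refl) (simp add: integral_kl_lists_marginal_Suc)
  also have "\<dots> = (\<integral>\<theta>. kl_lists (T + 1) (lik \<theta>) marg \<partial>theta_prior K)
                  - (\<integral>\<theta>. kl_lists 1 (lik \<theta>) marg \<partial>theta_prior K)"
    using sum_lessThan_telescope[of "\<lambda>t. \<integral>\<theta>. kl_lists (t + 1) (lik \<theta>) marg \<partial>theta_prior K" T]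
    by simp
  finally show ?thesis
    unfolding est_error_def kl_lists_marginal_1 by simp
qed

section \<open>Comparing with a Gaussian perturbation of the true parameter\<close>

lemma abs_ln_hist_lik_le: "\<exists>C\<ge>0. \<forall>t. \<bar>ln (lik t h)\<bar> \<le> C * (1 + sq_norm_sum K t)"
proof -
  define S where "S = {K - 1..<length h - 1}"
  define f where "f t s = (if h ! (s + 1) then ar_prob \<Phi>0 \<Phi>1 K t (take (s + 1) h) s
                           else 1 - ar_prob \<Phi>0 \<Phi>1 K t (take (s + 1) h) s)" for t s
  define c where "c = real (card S)"
  have lik: "lik t h = (1/2)^(min K (length h)) * prod (f t) S" for t
    unfolding hist_lik_def f_def S_def by simp
  have f_pos: "f t s > 0" for t s
    unfolding f_def ar_prob_def using sigmoid_pos sigmoid_less_1 by auto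
  have f_bound: "\<bar>ln (f t s)\<bar> \<le> 1 + (real K + sq_norm_sum K t)" for t s
  proof -
    define z where "z = (\<Sum>k\<in>{1..K}. t k \<bullet> feat \<Phi>0 \<Phi>1 (take (s + 1) h ! (s + 1 - k)))"
    have "\<bar>z\<bar> \<le> real K + sq_norm_sum K t"
      unfolding z_def sq_norm_sum_def by (rule abs_sum_inner_unit_le) (simp add: norm_feat[OF \<Phi>0 \<Phi>1])
    then show ?thesis
      unfolding f_def ar_prob_def z_def[symmetric] one_minus_sigmoid
      using abs_ln_sigmoid_le[of z] abs_ln_sigmoid_le[of "- z"] by auto
  qed
  have "\<bar>ln (lik t h)\<bar> \<le> (real K + c * (2 + real K)) * (1 + sq_norm_sum K t)" for t
  proof -
    have "ln (lik t h) = real (min K (length h)) * ln (1/2) + (\<Sum>s\<in>S. ln (f t s))"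
      unfolding lik using f_pos
      by (simp add: ln_mult_pos prod_pos less_imp_le ln_realpow ln_prod less_imp_neq[symmetric] S_def)
    then have "\<bar>ln (lik t h)\<bar> \<le> \<bar>real (min K (length h)) * ln (1/2)\<bar> + \<bar>\<Sum>s\<in>S. ln (f t s)\<bar>"
      by (simp only: abs_triangle_ineq)
    also have "\<dots> \<le> real (min K (length h)) * \<bar>ln (1/2)\<bar> + (\<Sum>s\<in>S. \<bar>ln (f t s)\<bar>)"
      by (intro add_mono) (simp_all add: abs_mult sum_abs)
    also have "\<dots> \<le> real K * 1 + (\<Sum>s\<in>S. 1 + (real K + sq_norm_sum K t))"
      using ln_2_less_1 by (intro add_mono mult_mono sum_mono f_bound) (auto simp: ln_div)
    also have "\<dots> \<le> (real K + c * (2 + real K)) * (1 + sq_norm_sum K t)"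
      using sq_norm_sum_nonneg[of K t] by (simp add: c_def algebra_simps)
    finally show ?thesis .
  qed
  then show ?thesis
    by (intro exI[of _ "real K + c * (2 + real K)"]) (simp add: c_def)
qed

text \<open>Before \<open>K\<close> symbols have been observed both predictions are \<open>1/2\<close>, hence the \<open>0\<close>.\<close>

definition kl_step_bound :: "(nat \<Rightarrow> real^'d) \<Rightarrow> (nat \<Rightarrow> real^'d) \<Rightarrow> bool list \<Rightarrow> real" where
  "kl_step_bound \<theta> t h =
     (if K \<le> length h then (logit \<Phi>0 \<Phi>1 K \<theta> h - logit \<Phi>0 \<Phi>1 K t h)^2 / 8 else 0)"

lemma kl_bern_next_prob_le:
  assumes h: "length h \<ge> 1"
  shows "kl_bern (nx \<theta> h) (nx t h) \<le> kl_step_bound \<theta> t h"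
proof (cases "K \<le> length h")
  case True
  then show ?thesis
    unfolding kl_step_bound_def next_prob_eq_sigmoid_logit[OF K True]
    using kl_bern_sigmoid_le by (simp add: power2_commute)
next
  case False
  then show ?thesis
    unfolding kl_step_bound_def using h by (simp add: next_prob_eq_half kl_bern_def)
qed

lemma kl_lists_hist_lik_le:
  assumes "n \<ge> 1"
  shows "kl_lists n (lik \<theta>) (lik t)
           \<le> (\<Sum>m\<in>{1..<n}. \<Sum>h\<in>{h. length h = m}. lik \<theta> h * kl_step_bound \<theta> t h)"
  using assms
proof (induction n rule: dec_induct)
  case base
  show ?case
    unfolding kl_lists_def by (simp add: hist_lik_length_1[OF K])
next
  case (step n)
  have "kl_lists (Suc n) (lik \<theta>) (lik t)
      = kl_lists n (lik \<theta>) (lik t) + (\<Sum>h\<in>{h. length h = n}. lik \<theta> h * kl_bern (nx \<theta> h) (nx t h))"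
  proof (rule kl_lists_Suc)
    fix h :: "bool list"
    assume "length h = n"
    then have h: "length h \<ge> 1"
      using step by simp
    show "lik \<theta> h > 0 \<and> lik t h > 0 \<and> 0 < nx \<theta> h \<and> nx \<theta> h < 1 \<and> 0 < nx t h \<and> nx t h < 1"
      using hist_lik_pos next_prob_pos next_prob_less_1 by auto
    show "lik \<theta> (h @ [True]) = lik \<theta> h * nx \<theta> h \<and> lik \<theta> (h @ [False]) = lik \<theta> h * (1 - nx \<theta> h)"
      "lik t (h @ [True]) = lik t h * nx t h \<and> lik t (h @ [False]) = lik t h * (1 - nx t h)"
      by (simp_all add: hist_lik_snoc[OF K h])
  qed
  also have "\<dots> \<le> (\<Sum>m\<in>{1..<n}. \<Sum>h\<in>{h. length h = m}. lik \<theta> h * kl_step_bound \<theta> t h)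
                  + (\<Sum>h\<in>{h. length h = n}. lik \<theta> h * kl_step_bound \<theta> t h)"
    using step by (intro add_mono sum_mono mult_left_mono kl_bern_next_prob_le)
      (auto simp: less_imp_le[OF hist_lik_pos])
  finally show ?case
    using step by simp
qed

context
  fixes s :: real and \<theta> :: "nat \<Rightarrow> real^'d"
  assumes s: "s > 0"
begin

abbreviation "dens t \<equiv> shift_density K s \<theta> t"

lemma shift_density_measurable [measurable]: "dens \<in> borel_measurable (theta_prior K)"
  using has_bochner_integral_shift_density[OF K s, THEN integrable.intros]
  by (rule borel_measurable_integrable)

lemma integrable_shift_density_ln_hist_lik:
  "integrable (theta_prior K) (\<lambda>t. dens t * ln (lik t h))"
proof -
  obtain C where C: "C \<ge> 0" "\<And>t. \<bar>ln (lik t h)\<bar> \<le> C * (1 + sq_norm_sum K t)"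
    using abs_ln_hist_lik_le by blast
  have "has_bochner_integral (theta_prior K) (\<lambda>t. dens t * sq_norm_sum K t)
          (\<Sum>j\<in>{1..K} \<times> UNIV. s^2 + (\<theta> (fst j) $ snd j)^2)"
    unfolding sq_norm_sum_coords sum_distrib_left
    by (intro has_bochner_integral_sum has_bochner_integral_shift_density_coord_square[OF K s]) auto
  then have bound: "integrable (theta_prior K) (\<lambda>t. C * dens t + C * (dens t * sq_norm_sum K t))"
    using has_bochner_integral_shift_density[OF K s]
    by (intro Bochner_Integration.integrable_add Bochner_Integration.integrable_mult_right integrable.intros)
  have "norm (dens t * ln (lik t h)) \<le> norm (C * dens t + C * (dens t * sq_norm_sum K t))" for t
  proof -
    have pos: "0 < dens t"
      by (rule shift_density_pos[OF K s])
    then have "dens t * \<bar>ln (lik t h)\<bar> \<le> dens t * (C * (1 + sq_norm_sum K t))"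
      using C(2)[of t] by (intro mult_left_mono) auto
    moreover have "0 \<le> C * dens t + C * (dens t * sq_norm_sum K t)"
      using pos C(1) sq_norm_sum_nonneg[of K t] by simp
    ultimately show ?thesis
      using pos by (simp add: abs_mult distrib_left distrib_right mult_ac)
  qed
  then show ?thesis
    by (intro Bochner_Integration.integrable_bound[OF bound] AE_I2) measurable
qed

lemma shift_density_mult_kl_lists:
  "dens t * kl_lists n (lik \<theta>) (lik t)
     = (\<Sum>h\<in>{h. length h = n}. lik \<theta> h * (ln (lik \<theta> h) * dens t - dens t * ln (lik t h)))"
  unfolding kl_lists_def sum_distrib_left
  by (intro sum.cong refl) (simp add: ln_divide_pos[OF hist_lik_pos hist_lik_pos] algebra_simps)

lemma integrable_shift_density_kl_lists:
  "integrable (theta_prior K) (\<lambda>t. dens t * kl_lists n (lik \<theta>) (lik t))"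
  unfolding shift_density_mult_kl_lists
  using has_bochner_integral_shift_density[OF K s, THEN integrable.intros]
  by (intro Bochner_Integration.integrable_sum Bochner_Integration.integrable_mult_right
      Bochner_Integration.integrable_diff integrable_shift_density_ln_hist_lik) auto

lemma kl_lists_marginal_le_average:
  assumes n: "n \<ge> 1"
  shows "kl_lists n (lik \<theta>) marg
           \<le> (\<integral>t. dens t * kl_lists n (lik \<theta>) (lik t) \<partial>theta_prior K)
             + (\<integral>t. dens t * ln (dens t) \<partial>theta_prior K)"
proof -
  define E where "E = (\<integral>t. dens t * ln (dens t) \<partial>theta_prior K)"
  define L where "L h = (\<integral>t. dens t * ln (lik t h) \<partial>theta_prior K)" for h
  have dens: "has_bochner_integral (theta_prior K) dens 1"
    by (rule has_bochner_integral_shift_density[OF K s])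
  have ln_marg: "L h - E \<le> ln (marg h)" for h
    unfolding L_def E_def
    using has_bochner_integral_shift_density_entropy[OF K s, of \<theta>]
    by (intro ln_integral_ge_relative_entropy integrable_hist_lik hist_lik_pos marginal_pos dens
        shift_density_pos[OF K s] integrable_shift_density_ln_hist_lik)
       (simp add: has_bochner_integral_iff)
  have avg: "(\<Sum>h\<in>{h. length h = n}. lik \<theta> h * (ln (lik \<theta> h) - L h))
      = (\<integral>t. dens t * kl_lists n (lik \<theta>) (lik t) \<partial>theta_prior K)"
  proof -
    have "has_bochner_integral (theta_prior K)
        (\<lambda>t. \<Sum>h\<in>{h. length h = n}. lik \<theta> h * (ln (lik \<theta> h) * dens t - dens t * ln (lik t h)))
        (\<Sum>h\<in>{h. length h = n}. lik \<theta> h * (ln (lik \<theta> h) * 1 - L h))"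
      unfolding L_def using dens integrable_shift_density_ln_hist_lik
      by (intro has_bochner_integral_sum has_bochner_integral_mult_right has_bochner_integral_diff)
         (auto simp: has_bochner_integral_iff)
    then show ?thesis
      unfolding shift_density_mult_kl_lists by (simp add: has_bochner_integral_iff)
  qed
  have "kl_lists n (lik \<theta>) marg = (\<Sum>h\<in>{h. length h = n}. lik \<theta> h * (ln (lik \<theta> h) - ln (marg h)))"
    unfolding kl_lists_def by (intro sum.cong refl) (simp add: ln_divide_pos[OF hist_lik_pos marginal_pos])
  also have "\<dots> \<le> (\<Sum>h\<in>{h. length h = n}. lik \<theta> h * (ln (lik \<theta> h) - L h + E))"
  proof (intro sum_mono mult_left_mono)
    show "ln (lik \<theta> h) - ln (marg h) \<le> ln (lik \<theta> h) - L h + E" for h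
      using ln_marg[of h] by linarith
  qed (simp add: less_imp_le[OF hist_lik_pos])
  also have "\<dots> = (\<Sum>h\<in>{h. length h = n}. lik \<theta> h * (ln (lik \<theta> h) - L h)) + E * (\<Sum>h\<in>{h. length h = n}. lik \<theta> h)"
    unfolding sum_distrib_left sum.distrib[symmetric] by (intro sum.cong refl) (simp add: algebra_simps)
  finally show ?thesis
    unfolding avg sum_hist_lik[OF K n] E_def by simp
qed

lemma integral_shift_density_kl_step_bound:
  "has_bochner_integral (theta_prior K) (\<lambda>t. dens t * kl_step_bound \<theta> t h)
     (if K \<le> length h then real K * s^2 / 8 else 0)"
proof (cases "K \<le> length h")
  case True
  define v where "v k = feat \<Phi>0 \<Phi>1 (h ! (length h - k))" for k
  have "sq_norm_sum K v = real K"
    unfolding sq_norm_sum_def v_def by (simp add: norm_feat[OF \<Phi>0 \<Phi>1])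
  then have val: "(if K \<le> length h then real K * s^2 / 8 else 0) = 1/8 * (s^2 * sq_norm_sum K v)"
    using True by simp
  have "(\<lambda>t. dens t * kl_step_bound \<theta> t h) = (\<lambda>t. 1/8 * (dens t * (\<Sum>k\<in>{1..K}. (t k - \<theta> k) \<bullet> v k)^2))"
    unfolding kl_step_bound_def logit_diff v_def using True by auto
  then show ?thesis
    unfolding val
    by (simp only:) (intro has_bochner_integral_mult_right has_bochner_integral_shift_density_linear_square[OF K s])
qed (simp add: kl_step_bound_def has_bochner_integral_zero)

lemma integral_shift_density_kl_lists_le:
  assumes n: "n \<ge> 1"
  shows "(\<integral>t. dens t * kl_lists n (lik \<theta>) (lik t) \<partial>theta_prior K) \<le> real (n - 1) * (real K * s^2 / 8)"
proof -
  define B where "B h = (if K \<le> length h then real K * s^2 / 8 else 0)" for h :: "bool list"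
  have step: "has_bochner_integral (theta_prior K) (\<lambda>t. dens t * kl_step_bound \<theta> t h) (B h)" for h
    unfolding B_def by (rule integral_shift_density_kl_step_bound)
  have sum_bound: "has_bochner_integral (theta_prior K)
      (\<lambda>t. \<Sum>m\<in>{1..<n}. \<Sum>h\<in>{h. length h = m}. lik \<theta> h * (dens t * kl_step_bound \<theta> t h))
      (\<Sum>m\<in>{1..<n}. \<Sum>h\<in>{h. length h = m}. lik \<theta> h * B h)"
    by (intro has_bochner_integral_sum has_bochner_integral_mult_right step)
  have "(\<integral>t. dens t * kl_lists n (lik \<theta>) (lik t) \<partial>theta_prior K)
      \<le> (\<integral>t. (\<Sum>m\<in>{1..<n}. \<Sum>h\<in>{h. length h = m}. lik \<theta> h * (dens t * kl_step_bound \<theta> t h)) \<partial>theta_prior K)"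
  proof (rule integral_mono[OF integrable_shift_density_kl_lists sum_bound[THEN integrable.intros]])
    fix t
    have "dens t * kl_lists n (lik \<theta>) (lik t)
        \<le> dens t * (\<Sum>m\<in>{1..<n}. \<Sum>h\<in>{h. length h = m}. lik \<theta> h * kl_step_bound \<theta> t h)"
      using kl_lists_hist_lik_le[OF n] less_imp_le[OF shift_density_pos[OF K s]] by (rule mult_left_mono)
    then show "dens t * kl_lists n (lik \<theta>) (lik t)
        \<le> (\<Sum>m\<in>{1..<n}. \<Sum>h\<in>{h. length h = m}. lik \<theta> h * (dens t * kl_step_bound \<theta> t h))"
      by (simp add: sum_distrib_left algebra_simps)
  qed
  also have "\<dots> \<le> (\<Sum>m\<in>{1..<n}. \<Sum>h\<in>{h. length h = m}. lik \<theta> h * (real K * s^2 / 8))"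
    using sum_bound by (simp add: has_bochner_integral_iff B_def less_imp_le[OF hist_lik_pos] sum_mono mult_left_mono)
  also have "\<dots> = (\<Sum>m\<in>{1..<n}. (\<Sum>h\<in>{h. length h = m}. lik \<theta> h) * (real K * s^2 / 8))"
    by (simp only: sum_distrib_right)
  also have "\<dots> = real (n - 1) * (real K * s^2 / 8)"
    by (simp add: sum_hist_lik[OF K])
  finally show ?thesis .
qed

end

lemma integral_kl_lists_marginal_le:
  assumes s: "s > 0"
  shows "(\<integral>\<theta>. kl_lists (T + 1) (lik \<theta>) marg \<partial>theta_prior K)
           \<le> real T * (real K * s^2 / 8)
             + real CARD('d) * real K * (ln (prior_sd K / s) + real K * s^2 / 2)"
proof -
  define c where "c = real K * real CARD('d) * (ln (prior_sd K / s) - 1/2 + real K * s^2 / 2)"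
  have bound: "kl_lists (T + 1) (lik \<theta>) marg \<le> real T * (real K * s^2 / 8) + c + real K / 2 * sq_norm_sum K \<theta>"
    for \<theta>
    using kl_lists_marginal_le_average[OF s, of "T + 1" \<theta>] integral_shift_density_kl_lists_le[OF s, of "T + 1" \<theta>]
      has_bochner_integral_shift_density_entropy[OF K s, of \<theta>]
    by (simp add: c_def has_bochner_integral_iff)
  interpret prob_space "theta_prior K :: (nat \<Rightarrow> real^'d) measure"
    by (rule prob_space_theta_prior[OF K])
  have "has_bochner_integral (theta_prior K :: (nat \<Rightarrow> real^'d) measure) (\<lambda>_. real T * (real K * s^2 / 8) + c)
      (real T * (real K * s^2 / 8) + c)"
    by (simp add: has_bochner_integral_iff prob_space)
  from has_bochner_integral_add[OF this
      has_bochner_integral_mult_right[OF has_bochner_integral_theta_prior_sq_norm_sum[OF K], of "real K / 2"]]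
  have R: "has_bochner_integral (theta_prior K :: (nat \<Rightarrow> real^'d) measure)
      (\<lambda>\<theta>. real T * (real K * s^2 / 8) + c + real K / 2 * sq_norm_sum K \<theta>)
      (real T * (real K * s^2 / 8) + c + real K / 2 * real CARD('d))" .
  have "(\<integral>\<theta>. kl_lists (T + 1) (lik \<theta>) marg \<partial>theta_prior K)
      \<le> (\<integral>\<theta>. real T * (real K * s^2 / 8) + c + real K / 2 * sq_norm_sum K \<theta>
             \<partial>(theta_prior K :: (nat \<Rightarrow> real^'d) measure))"
    by (rule integral_mono[OF integrable_kl_lists_marginal R[THEN integrable.intros] bound])
  also have "\<dots> = real T * (real K * s^2 / 8) + c + real K / 2 * real CARD('d)"
    by (rule has_bochner_integral_integral_eq[OF R])
  also have "real T * (real K * s^2 / 8) + c + real K / 2 * real CARD('d)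
      = real T * (real K * s^2 / 8) + real CARD('d) * real K * (ln (prior_sd K / s) + real K * s^2 / 2)"
    unfolding c_def by (simp add: algebra_simps)
  finally show ?thesis .
qed

end

text \<open>The optimal scale of the perturbation is given by \<open>K s\<^sup>2 = 4D / (4D + T)\<close>.\<close>

lemma exists_shift_scale:
  fixes D T :: real
  assumes K: "K > 0" and D: "D > 0" and T: "T \<ge> 0"
  shows "\<exists>s>0. T * (real K * s^2 / 8) + D * (ln (prior_sd K / s) + real K * s^2 / 2)
                = D / 2 * (1 + ln (1 + T / (4 * D)))"
proof -
  define u where "u = 4 * D / (4 * D + T)"
  have u: "u > 0"
    unfolding u_def using D T by simp
  define s where "s = sqrt (u / real K)"
  have s: "s > 0"
    unfolding s_def using u K by simp
  have Ks: "real K * s^2 = u"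
    unfolding s_def using u K by simp
  have "prior_sd K / s = 1 / sqrt u"
    unfolding prior_sd_def s_def using u K by (simp add: real_sqrt_divide)
  then have "ln (prior_sd K / s) = - ln u / 2"
    using u by (simp add: ln_div ln_sqrt)
  moreover have "ln (1 + T / (4 * D)) = - ln u"
  proof -
    have "1 + T / (4 * D) = 1 / u"
      unfolding u_def using D T by (simp add: field_simps)
    then show ?thesis
      using u by (simp add: ln_div)
  qed
  moreover have "T * (u / 8) + D * (u / 2) = D / 2"
  proof -
    have "u * (4 * D + T) = 4 * D"
      unfolding u_def using D T by simp
    then show ?thesis
      by (simp add: algebra_simps)
  qed
  ultimately show ?thesis
    using s Ks by (intro exI[of _ s]) (simp add: algebra_simps)
qed

theorem mainTheorem12:
  fixes \<Phi>0 \<Phi>1 :: "real^'d" and K T :: nat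
  assumes "K > 0" and "T > 0" and "norm \<Phi>0 = 1" and "norm \<Phi>1 = 1"
  shows "est_error \<Phi>0 \<Phi>1 K T
           \<le> real CARD('d) * real K / (2 * real T)
              * (1 + ln (1 + real T / (4 * real CARD('d) * real K)))"
proof -
  let ?D = "real CARD('d) * real K"
  obtain s where s: "s > 0" and opt:
    "real T * (real K * s^2 / 8) + ?D * (ln (prior_sd K / s) + real K * s^2 / 2)
       = ?D / 2 * (1 + ln (1 + real T / (4 * ?D)))"
    using exists_shift_scale[of K ?D "real T"] assms(1) by auto
  have "est_error \<Phi>0 \<Phi>1 K T
      \<le> (real T * (real K * s^2 / 8) + ?D * (ln (prior_sd K / s) + real K * s^2 / 2)) / real T"
    unfolding est_error_eq_integral_kl_lists[OF assms(1,3,4,2)]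
    using integral_kl_lists_marginal_le[OF assms(1,3,4) s] assms(2) by (intro divide_right_mono) auto
  then show ?thesis
    unfolding opt by (simp add: mult_ac)
qed

end
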